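(* Let $M_G$ be a mixed graph of order $n$ and write $\det(xI-N(M_G))=x^n+c_1x^{n-1}+\dots+c_{n-1}x+c_n$. Then for each $k$, $$c_k=\sum_{M_{G'}}(-1)^{-k+r(G')+l_{sn}(M_{G'})+l_n(M_{G'})}\cdot 2^{l_p(M_{G'})+l_n(M_{G'})},$$ where the sum runs over all elementary mixed subgraphs $M_{G'}$ of $M_G$ with $k$ vertices, $G'$ is the underlying graph of $M_{G'}$, and $l_p(M_{G'}),l_n(M_{G'}),l_{sn}(M_{G'})$ are the numbers of positive, negative and semi-negative mixed cycles in $M_{G'}$, respectively.
   Context: A mixed graph $M_G$ is obtained from a finite simple graph $G$ by orienting the edges of some subset of $E(G)$. With $\omega=\frac{1+\mathbf{i}\sqrt3}{2}$, $N(M_G)=(n_{st})$ has entry $\omega$ for an arc from $u_s$ to $u_t$, $\bar\omega$ for an arc from $u_t$ to $u_s$, $1$ for an undirected edge, $0$ otherwise. A mixed subgraph keeps the directions of $M_G$. A mixed cycle is a mixed graph whose underlying graph is a cycle; for a mixed cycle $v_1v_2\cdots v_lv_1$ its weight (in that direction) is $n_{12}n_{23}\cdots n_{(l-1)l}n_{l1}$. A mixed cycle is positive if its weight is $1$, negative if $-1$, semi-positive if its weight is in $\{\omega,\bar\omega\}$, semi-negative if in $\{-\omega,-\bar\omega\}$ (these notions do not depend on the direction). An elementary mixed graph is one in which every component is a single edge (directed or not) or a mixed cycle. For a simple graph $H$, $r(H)=|V(H)|-t(H)$ where $t(H)$ is the number of components. *)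

theory Defs
  imports Complex_Main "Jordan_Normal_Form.Char_Poly"
begin

text \<open>A mixed graph of order n: vertex set {0..<n}; E is the edge set of the
underlying simple graph (2-element subsets); D is the set of arcs, (u,v) \<in> D
meaning the edge {u,v} is oriented from u to v.\<close>

definition mixed_graph :: "nat \<Rightarrow> nat set set \<Rightarrow> (nat \<times> nat) set \<Rightarrow> bool" where
  "mixed_graph n E D \<longleftrightarrow>
     (\<forall>e\<in>E. \<exists>u v. e = {u, v} \<and> u \<noteq> v \<and> u < n \<and> v < n) \<and>
     (\<forall>(u,v)\<in>D. {u, v} \<in> E) \<and>
     (\<forall>(u,v)\<in>D. (v,u) \<notin> D)"

definition omega :: complex where
  "omega = (1 + \<i> * complex_of_real (sqrt 3)) / 2"

definition n_entry :: "nat set set \<Rightarrow> (nat \<times> nat) set \<Rightarrow> nat \<Rightarrow> nat \<Rightarrow> complex" where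
  "n_entry E D s t =
     (if (s,t) \<in> D then omega
      else if (t,s) \<in> D then cnj omega
      else if {s,t} \<in> E then 1 else 0)"

definition N_mat :: "nat \<Rightarrow> nat set set \<Rightarrow> (nat \<times> nat) set \<Rightarrow> complex mat" where
  "N_mat n E D = mat n n (\<lambda>(s,t). n_entry E D s t)"

text \<open>Subgraphs without isolated vertices are given by their edge set F.\<close>

definition verts :: "nat set set \<Rightarrow> nat set" where
  "verts F = \<Union>F"

definition adj_rel :: "nat set set \<Rightarrow> nat rel" where
  "adj_rel F = {(x,y). {x,y} \<in> F}"

definition component :: "nat set set \<Rightarrow> nat \<Rightarrow> nat set" where
  "component F v = {u \<in> verts F. (v,u) \<in> (adj_rel F)\<^sup>*}"

definition components :: "nat set set \<Rightarrow> nat set set" where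
  "components F = component F ` verts F"

definition comp_edges :: "nat set set \<Rightarrow> nat set \<Rightarrow> nat set set" where
  "comp_edges F C = {e \<in> F. e \<subseteq> C}"

definition rank_r :: "nat set set \<Rightarrow> nat" where
  "rank_r F = card (verts F) - card (components F)"

definition cycle_enum :: "nat list \<Rightarrow> nat set \<Rightarrow> nat set set \<Rightarrow> bool" where
  "cycle_enum vs C F \<longleftrightarrow> distinct vs \<and> length vs \<ge> 3 \<and> set vs = C \<and>
     F = {{vs ! i, vs ! ((i + 1) mod length vs)} | i. i < length vs}"

definition is_cycle :: "nat set \<Rightarrow> nat set set \<Rightarrow> bool" where
  "is_cycle C F \<longleftrightarrow> (\<exists>vs. cycle_enum vs C F)"

definition cycle_weight :: "nat set set \<Rightarrow> (nat \<times> nat) set \<Rightarrow> nat list \<Rightarrow> complex" where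
  "cycle_weight E D vs =
     (\<Prod>i<length vs. n_entry E D (vs ! i) (vs ! ((i + 1) mod length vs)))"

definition cycle_has_weight_in ::
  "nat set set \<Rightarrow> (nat \<times> nat) set \<Rightarrow> nat set set \<Rightarrow> complex set \<Rightarrow> nat set \<Rightarrow> bool" where
  "cycle_has_weight_in E D F W C \<longleftrightarrow>
     (\<exists>vs. cycle_enum vs C (comp_edges F C) \<and> cycle_weight E D vs \<in> W)"

definition num_cycles ::
  "nat set set \<Rightarrow> (nat \<times> nat) set \<Rightarrow> nat set set \<Rightarrow> complex set \<Rightarrow> nat" where
  "num_cycles E D F W = card {C \<in> components F. cycle_has_weight_in E D F W C}"

definition l_p where "l_p E D F = num_cycles E D F {1}"
definition l_n where "l_n E D F = num_cycles E D F {-1}"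
definition l_sn where "l_sn E D F = num_cycles E D F {- omega, - cnj omega}"

text \<open>elementary mixed subgraph (given by its edge set F \<subseteq> E; arcs inherited):
every component is a single edge or a cycle\<close>
definition elementary :: "nat set set \<Rightarrow> nat set set \<Rightarrow> bool" where
  "elementary E F \<longleftrightarrow> F \<subseteq> E \<and>
     (\<forall>C\<in>components F. card C = 2 \<or> is_cycle C (comp_edges F C))"

end

theory Submission
  imports Defs "HOL-Combinatorics.Cycles"
begin

text \<open>
  Expanding \<open>det (xI - N)\<close> by the Leibniz formula, the coefficient of \<open>x^(n-k)\<close> is \<open>(-1)^k\<close>
  times the sum, over the permutations \<open>p\<close> moving exactly \<open>k\<close> points, of \<open>sign p\<close> times the
  product of the entries \<open>N(i, p i)\<close> with \<open>p i \<noteq> i\<close>. Such a term vanishes unless the graph of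
  \<open>p\<close>, formed by the edges \<open>{i, p i}\<close>, lies in \<open>E\<close>. Each component of this graph is a single
  edge, traversed by a transposition, or a cycle of length at least 3, traversed by \<open>p\<close> in one of its
  two directions. Grouping the permutations by their graph \<open>F\<close> therefore turns the sum into a sum
  over the elementary subgraphs with \<open>k\<close> vertices, and for fixed \<open>F\<close> the inner sum factorises
  over the components of \<open>F\<close>. An edge \<open>{u, v}\<close> contributes \<open>-N(u,v) N(v,u) = -1\<close>. The two
  orientations of a cycle \<open>C\<close> have the same sign \<open>(-1)^(|C|-1)\<close> and conjugate weights \<open>W\<close>
  and \<open>cnj W\<close>; as \<open>W\<close> is a sixth root of unity, \<open>W + cnj W\<close> is 2, -2, 1 or -1 according as
  \<open>C\<close> is positive, negative, semi-positive or semi-negative. Since the exponents \<open>|C| - 1\<close> add up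
  to \<open>r(F)\<close>, the product is \<open>(-1)^(r(F) + l_sn + l_n) 2^(l_p + l_n)\<close>.
\<close>

section \<open>Connected components of an edge set\<close>

lemma sym_adj_rel: "sym (adj_rel F)"
  unfolding adj_rel_def sym_def by (auto simp: insert_commute)

lemma component_eq:
  assumes "y \<in> component F x"
  shows "component F y = component F x"
proof -
  have xy: "(x, y) \<in> (adj_rel F)\<^sup>*"
    using assms unfolding component_def by auto
  then have "(y, x) \<in> (adj_rel F)\<^sup>*"
    using sym_adj_rel sym_rtrancl symD by metis
  with xy show ?thesis
    unfolding component_def by (auto intro: rtrancl_trans)
qed

lemma mem_component_self: "x \<in> verts F \<Longrightarrow> x \<in> component F x"
  unfolding component_def by auto

lemma component_of_mem: "C \<in> components F \<Longrightarrow> x \<in> C \<Longrightarrow> C = component F x"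
  unfolding components_def using component_eq by blast

lemma components_subset_verts: "C \<in> components F \<Longrightarrow> C \<subseteq> verts F"
  unfolding components_def component_def by auto

lemma components_disjoint:
  "C \<in> components F \<Longrightarrow> C' \<in> components F \<Longrightarrow> C \<noteq> C' \<Longrightarrow> C \<inter> C' = {}"
  using component_of_mem by blast

lemma disjoint_components: "disjoint (components F)"
  unfolding pairwise_def disjnt_def using components_disjoint by blast

lemma Union_components: "\<Union>(components F) = verts F"
  unfolding components_def using mem_component_self component_def by fastforce

lemma component_nonempty: "C \<in> components F \<Longrightarrow> C \<noteq> {}"
  unfolding components_def using mem_component_self by blast

lemma finite_verts: "finite F \<Longrightarrow> \<forall>e\<in>F. card e = 2 \<Longrightarrow> finite (verts F)"
  unfolding verts_def by (metis card_eq_0_iff finite_Union zero_neq_numeral)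

lemma finite_components: "finite F \<Longrightarrow> \<forall>e\<in>F. card e = 2 \<Longrightarrow> finite (components F)"
  unfolding components_def by (intro finite_imageI finite_verts)

lemma finite_component: "finite F \<Longrightarrow> \<forall>e\<in>F. card e = 2 \<Longrightarrow> C \<in> components F \<Longrightarrow> finite C"
  using finite_subset[OF components_subset_verts finite_verts] .

lemma doubleton_subset_component:
  assumes "{x, y} \<in> F"
  shows "{x, y} \<subseteq> component F x"
proof -
  have "x \<in> verts F" "y \<in> verts F" "(x, y) \<in> adj_rel F"
    using assms unfolding verts_def adj_rel_def by auto
  then show ?thesis
    unfolding component_def by auto
qed

lemma edge_subset_component:
  assumes "e \<in> F" "card e = 2" "x \<in> e"
  shows "e \<subseteq> component F x"
proof -
  from assms(2) obtain u v where uv: "e = {u, v}"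
    by (auto simp: card_2_iff)
  with assms(3) have "e = {x, v} \<or> e = {x, u}"
    by (auto simp: insert_commute)
  with assms(1) show ?thesis
    using doubleton_subset_component by metis
qed

lemma Union_comp_edges:
  assumes "\<forall>e\<in>F. card e = 2"
  shows "(\<Union>C\<in>components F. comp_edges F C) = F"
proof
  show "(\<Union>C\<in>components F. comp_edges F C) \<subseteq> F"
    unfolding comp_edges_def by auto
  show "F \<subseteq> (\<Union>C\<in>components F. comp_edges F C)"
  proof
    fix e assume e: "e \<in> F"
    with assms obtain x y where xy: "e = {x, y}"
      by (auto simp: card_2_iff)
    have "component F x \<in> components F"
      using e xy unfolding components_def verts_def by blast
    moreover have "e \<subseteq> component F x"
      using doubleton_subset_component e xy by blast
    ultimately show "e \<in> (\<Union>C\<in>components F. comp_edges F C)"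
      using e unfolding comp_edges_def by blast
  qed
qed

lemma verts_comp_edges:
  assumes "\<forall>e\<in>F. card e = 2" "C \<in> components F"
  shows "verts (comp_edges F C) = C"
proof
  show "verts (comp_edges F C) \<subseteq> C"
    unfolding verts_def comp_edges_def by auto
  show "C \<subseteq> verts (comp_edges F C)"
  proof
    fix x assume "x \<in> C"
    then obtain e where e: "e \<in> F" "x \<in> e"
      using components_subset_verts[OF assms(2)] unfolding verts_def by auto
    then have "e \<subseteq> C"
      using edge_subset_component assms(1) component_of_mem[OF assms(2) \<open>x \<in> C\<close>] by simp
    with e show "x \<in> verts (comp_edges F C)"
      unfolding verts_def comp_edges_def by blast
  qed
qed

lemma rtrancl_adj_rel_comp_edges:
  assumes "C \<in> components F" "x \<in> C" "(x, y) \<in> (adj_rel F)\<^sup>*"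
  shows "(x, y) \<in> (adj_rel (comp_edges F C))\<^sup>*"
  using assms(3)
proof (induction rule: rtrancl_induct)
  case (step y z)
  have yz: "{y, z} \<in> F"
    using step.hyps(2) unfolding adj_rel_def by simp
  then have "y \<in> verts F" "z \<in> verts F"
    unfolding verts_def by auto
  moreover have "(x, z) \<in> (adj_rel F)\<^sup>*"
    using step.hyps by simp
  ultimately have "{y, z} \<subseteq> C"
    using step.hyps(1) component_of_mem[OF assms(1,2)] unfolding component_def by simp
  with yz have "(y, z) \<in> adj_rel (comp_edges F C)"
    unfolding adj_rel_def comp_edges_def by simp
  with step.IH show ?case
    by simp
qed simp

lemma comp_edges_card_2:
  assumes F: "\<forall>e\<in>F. card e = 2" and C: "C \<in> components F" "card C = 2"
  shows "comp_edges F C = {C}"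
proof -
  have "finite C"
    using C(2) by (metis card.infinite zero_neq_numeral)
  have "e = C" if "e \<in> comp_edges F C" for e
  proof -
    have "e \<subseteq> C" "card e = 2"
      using that F unfolding comp_edges_def by auto
    then show "e = C"
      using card_subset_eq[OF \<open>finite C\<close>] C(2) by metis
  qed
  moreover have "comp_edges F C \<noteq> {}"
    using verts_comp_edges[OF F C(1)] component_nonempty[OF C(1)] unfolding verts_def by auto
  ultimately show ?thesis
    by blast
qed

lemma sum_card_components:
  assumes "finite F" "\<forall>e\<in>F. card e = 2"
  shows "(\<Sum>C\<in>components F. card C - 1) = rank_r F"
proof -
  have fin: "finite (components F)" "\<forall>C\<in>components F. finite C"
    using finite_components[OF assms] finite_component[OF assms] by blast+
  have "\<forall>C\<in>components F. 1 \<le> card C"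
    using fin(2) component_nonempty by (simp add: Suc_le_eq card_gt_0_iff)
  then have "(\<Sum>C\<in>components F. card C - 1) = (\<Sum>C\<in>components F. card C) - card (components F)"
    by (simp add: sum_subtractf_nat)
  also have "(\<Sum>C\<in>components F. card C) = card (verts F)"
    using card_Union_disjoint[of "components F"] fin(2) components_disjoint Union_components
    unfolding pairwise_def disjnt_def by metis
  finally show ?thesis
    unfolding rank_r_def .
qed

section \<open>The graph of a permutation\<close>

definition perm_graph :: "('a \<Rightarrow> 'a) \<Rightarrow> 'a set set" where
  "perm_graph p = {{i, p i} | i. p i \<noteq> i}"

lemma doubleton_in_perm_graph_iff: "{x, y} \<in> perm_graph p \<longleftrightarrow> x \<noteq> y \<and> (p x = y \<or> p y = x)"
  unfolding perm_graph_def by (auto simp: doubleton_eq_iff)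

lemma perm_graph_edgeE:
  assumes "e \<in> perm_graph p"
  obtains x y where "e = {x, y}" "{x, y} \<in> perm_graph p"
  using assms unfolding perm_graph_def by auto

lemma card_perm_graph_edge: "e \<in> perm_graph p \<Longrightarrow> card e = 2"
  unfolding perm_graph_def by auto

lemma verts_perm_graph: "inj p \<Longrightarrow> verts (perm_graph p) = {x. p x \<noteq> x}"
  unfolding verts_def perm_graph_def by (auto dest: injD)

lemma moved_subset_if_permutes: "p permutes A \<Longrightarrow> {i. p i \<noteq> i} \<subseteq> A"
  using permutes_not_in by fastforce

(* Hilbert_Choice.inv is spelled out because the HOL-Algebra syntax imported with
   Jordan_Normal_Form rebinds inv. *)
lemma perm_graph_inv:
  assumes "bij p"
  shows "perm_graph (Hilbert_Choice.inv p) = perm_graph p"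
proof -
  have "Hilbert_Choice.inv p x = y \<longleftrightarrow> p y = x" for x y
    using bij_inv_eq_iff[OF assms] by metis
  then have edge: "{x, y} \<in> perm_graph (Hilbert_Choice.inv p) \<longleftrightarrow> {x, y} \<in> perm_graph p" for x y
    unfolding doubleton_in_perm_graph_iff by blast
  show ?thesis
  proof (intro equalityI subsetI)
    fix e assume "e \<in> perm_graph (Hilbert_Choice.inv p)"
    then show "e \<in> perm_graph p"
      using edge by (metis perm_graph_edgeE)
  next
    fix e assume "e \<in> perm_graph p"
    then show "e \<in> perm_graph (Hilbert_Choice.inv p)"
      using edge by (metis perm_graph_edgeE)
  qed
qed

lemma perm_graph_transpose:
  assumes "u \<noteq> v"
  shows "perm_graph (transpose u v) = {{u, v}}"
proof (intro equalityI subsetI)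
  fix e assume "e \<in> perm_graph (transpose u v)"
  then obtain i where "e = {i, transpose u v i}" "transpose u v i \<noteq> i"
    unfolding perm_graph_def by blast
  then show "e \<in> {{u, v}}"
    by (cases "i = u"; cases "i = v") (auto simp: insert_commute)
next
  fix e assume "e \<in> {{u, v}}"
  then have "e = {u, transpose u v u}" "transpose u v u \<noteq> u"
    using assms by auto
  then show "e \<in> perm_graph (transpose u v)"
    unfolding perm_graph_def by blast
qed

lemma perms_with_doubleton_graph:
  fixes u v :: 'a
  assumes "u \<noteq> v"
  shows "{q. q permutes {u, v} \<and> perm_graph q = {{u, v}}} = {transpose u v}"
proof (intro equalityI subsetI)
  fix q assume "q \<in> {q. q permutes {u, v} \<and> perm_graph q = {{u, v}}}"
  then have "q = id \<or> q = transpose u v" "perm_graph q = {{u, v}}"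
    by (auto simp: permutes_doubleton_iff)
  moreover have "perm_graph (id :: 'a \<Rightarrow> 'a) = {}"
    unfolding perm_graph_def by simp
  ultimately show "q \<in> {transpose u v}"
    by auto
next
  fix q assume "q \<in> {transpose u v}"
  then show "q \<in> {q. q permutes {u, v} \<and> perm_graph q = {{u, v}}}"
    using perm_graph_transpose[OF assms] permutes_swap_id[of u "{u, v}" v] by simp
qed

lemma perm_graph_restrict_id:
  assumes "\<forall>i\<in>C. p i \<in> C"
  shows "perm_graph (restrict_id p C) = comp_edges (perm_graph p) C"
proof (intro equalityI subsetI)
  fix e assume "e \<in> perm_graph (restrict_id p C)"
  then obtain i where e: "e = {i, restrict_id p C i}" "restrict_id p C i \<noteq> i"
    unfolding perm_graph_def by blast
  then have "i \<in> C"
    by (metis restrict_id_simps(2))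
  with e assms show "e \<in> comp_edges (perm_graph p) C"
    unfolding comp_edges_def perm_graph_def by auto
next
  fix e assume "e \<in> comp_edges (perm_graph p) C"
  then obtain i where "e = {i, p i}" "p i \<noteq> i" "i \<in> C"
    unfolding comp_edges_def perm_graph_def by auto
  then show "e \<in> perm_graph (restrict_id p C)"
    unfolding perm_graph_def by auto
qed

lemma perm_graph_eq_Union_restrict_id:
  assumes "p permutes \<Union>S"
  shows "perm_graph p = (\<Union>C\<in>S. perm_graph (restrict_id p C))"
proof (intro equalityI subsetI)
  fix e assume "e \<in> perm_graph p"
  then obtain i where e: "e = {i, p i}" "p i \<noteq> i"
    unfolding perm_graph_def by blast
  then obtain C where "C \<in> S" "i \<in> C"
    using permutes_not_in[OF assms] by blast
  with e show "e \<in> (\<Union>C\<in>S. perm_graph (restrict_id p C))"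
    unfolding perm_graph_def by force
next
  fix e assume "e \<in> (\<Union>C\<in>S. perm_graph (restrict_id p C))"
  then obtain C i where "e = {i, restrict_id p C i}" "restrict_id p C i \<noteq> i"
    unfolding perm_graph_def by blast
  then show "e \<in> perm_graph p"
    unfolding perm_graph_def by (cases "i \<in> C") auto
qed

section \<open>Cyclic permutations\<close>

lemma cycle_of_list_funpow_nth:
  assumes "distinct vs" "i < length vs"
  shows "(cycle_of_list vs ^^ j) (vs ! i) = vs ! ((i + j) mod length vs)"
proof -
  have "map (cycle_of_list vs ^^ j) vs ! i = rotate j vs ! i"
    using cyclic_rotation[OF assms(1)] by simp
  then show ?thesis
    using assms(2) by (simp add: nth_rotate add.commute)
qed

lemma add_mod_neq_self: "i < m \<Longrightarrow> 0 < j \<Longrightarrow> j < m \<Longrightarrow> (i + j) mod m \<noteq> (i::nat)"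
  by (metis add.commute add_right_cancel div_mod_decomp mod_less mod_mult_self2_is_0 not_gr_zero)

lemma cycle_of_list_nth:
  "distinct vs \<Longrightarrow> i < length vs \<Longrightarrow> cycle_of_list vs (vs ! i) = vs ! ((i + 1) mod length vs)"
  using cycle_of_list_funpow_nth[of vs i 1] by simp

lemma cycle_of_list_funpow_neq:
  assumes "distinct vs" "x \<in> set vs" "0 < j" "j < length vs"
  shows "(cycle_of_list vs ^^ j) x \<noteq> x"
proof -
  obtain i where i: "i < length vs" "x = vs ! i"
    using assms(2) by (metis in_set_conv_nth)
  have "(i + j) mod length vs \<noteq> i"
    using add_mod_neq_self[OF i(1) assms(3,4)] .
  moreover have "(i + j) mod length vs < length vs"
    using i(1) by (intro mod_less_divisor) linarith
  ultimately show ?thesis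
    using cycle_of_list_funpow_nth[OF assms(1) i(1)] assms(1) i by (simp add: nth_eq_iff_index_eq)
qed

lemma cycle_of_list_moves: "distinct vs \<Longrightarrow> 2 \<le> length vs \<Longrightarrow> x \<in> set vs \<Longrightarrow> cycle_of_list vs x \<noteq> x"
  using cycle_of_list_funpow_neq[of vs x 1] by simp

lemma cycle_of_list_twice_moves:
  "distinct vs \<Longrightarrow> 3 \<le> length vs \<Longrightarrow> x \<in> set vs \<Longrightarrow> cycle_of_list vs (cycle_of_list vs x) \<noteq> x"
  using cycle_of_list_funpow_neq[of vs x 2] by (simp add: numeral_2_eq_2)

lemma orbit_hd_cycle_of_list:
  assumes "distinct vs" "x \<in> set vs"
  shows "\<exists>j. x = (cycle_of_list vs ^^ j) (hd vs)"
proof -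
  obtain j where j: "j < length vs" "x = vs ! j"
    using assms(2) by (metis in_set_conv_nth)
  moreover from j have "vs \<noteq> []"
    by auto
  ultimately have "(cycle_of_list vs ^^ j) (hd vs) = x"
    using cycle_of_list_funpow_nth[OF assms(1), of 0 j] by (simp add: hd_conv_nth)
  then show ?thesis
    by metis
qed

lemma perm_graph_cycle_of_list:
  assumes "distinct vs" "2 \<le> length vs"
  shows "perm_graph (cycle_of_list vs) = {{vs ! i, vs ! ((i + 1) mod length vs)} | i. i < length vs}"
proof -
  let ?c = "cycle_of_list vs"
  have "?c x \<noteq> x \<longleftrightarrow> x \<in> set vs" for x
    using cycle_of_list_moves[OF assms] id_outside_supp by metis
  then have "perm_graph ?c = {{x, ?c x} | x. x \<in> set vs}"
    unfolding perm_graph_def by blast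
  also have "\<dots> = {{vs ! i, ?c (vs ! i)} | i. i < length vs}"
    unfolding in_set_conv_nth by blast
  also have "\<dots> = {{vs ! i, vs ! ((i + 1) mod length vs)} | i. i < length vs}"
    by (auto simp: cycle_of_list_nth[OF assms(1)])
  finally show ?thesis .
qed

lemma sign_cycle_of_list:
  "distinct vs \<Longrightarrow> vs \<noteq> [] \<Longrightarrow> sign (cycle_of_list vs) = (-1) ^ (length vs - 1)"
proof (induction vs rule: cycle_of_list.induct)
  case (1 i j cs)
  have "sign (cycle_of_list (i # j # cs)) = sign (transpose i j) * sign (cycle_of_list (j # cs))"
    by (simp add: sign_compose permutation_of_cycle permutation_swap_id)
  also have "\<dots> = - sign (cycle_of_list (j # cs))"
    using "1.prems"(1) by (simp add: sign_swap_id)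
  also have "\<dots> = (-1) ^ (length (i # j # cs) - 1)"
    using "1.IH" "1.prems" by simp
  finally show ?case .
qed auto

lemma perm_eq_cycle_of_list_if_same_graph:
  assumes d: "distinct vs" and l: "3 \<le> length vs"
    and q: "q permutes set vs" and g: "perm_graph q = perm_graph (cycle_of_list vs)"
    and start: "q (hd vs) = cycle_of_list vs (hd vs)"
  shows "q = cycle_of_list vs"
proof -
  let ?c = "cycle_of_list vs"
  have cin: "?c x \<in> set vs \<longleftrightarrow> x \<in> set vs" for x
    using permutes_in_image[OF cycle_permutes] .
  \<comment> \<open>The edge \<open>{c x, c (c x)}\<close> of the graph of \<open>q\<close> is oriented as in \<open>c\<close>,
    for otherwise \<open>q\<close> would map both \<open>c (c x)\<close> and \<open>x\<close> to \<open>c x\<close>.\<close>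
  have step: "q (?c x) = ?c (?c x)" if x: "x \<in> set vs" and qx: "q x = ?c x" for x
  proof -
    have "{?c x, ?c (?c x)} \<in> perm_graph q"
      unfolding g doubleton_in_perm_graph_iff using cycle_of_list_moves[OF d _ cin[THEN iffD2, OF x]] l
      by simp
    then have "q (?c x) = ?c (?c x) \<or> q (?c (?c x)) = ?c x"
      by (simp add: doubleton_in_perm_graph_iff)
    moreover have "q (?c (?c x)) \<noteq> ?c x"
    proof
      assume "q (?c (?c x)) = ?c x"
      then have "?c (?c x) = x"
        using qx permutes_inj[OF q] by (metis injD)
      then show False
        using cycle_of_list_twice_moves[OF d l x] by simp
    qed
    ultimately show ?thesis
      by blast
  qed
  have hd: "hd vs \<in> set vs"
    using l by (cases vs) auto
  have orbit: "(?c ^^ j) (hd vs) \<in> set vs \<and> q ((?c ^^ j) (hd vs)) = ?c ((?c ^^ j) (hd vs))" for j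
    by (induction j) (simp_all add: hd start step cin)
  show ?thesis
  proof
    fix x
    show "q x = ?c x"
    proof (cases "x \<in> set vs")
      case True
      then show ?thesis
        using orbit orbit_hd_cycle_of_list[OF d True] by metis
    next
      case False
      then show ?thesis
        using permutes_not_in[OF q] id_outside_supp by metis
    qed
  qed
qed

lemma perms_with_cycle_graph:
  assumes d: "distinct vs" and l: "3 \<le> length vs"
  shows "{q. q permutes set vs \<and> perm_graph q = perm_graph (cycle_of_list vs)}
    = {cycle_of_list vs, Hilbert_Choice.inv (cycle_of_list vs)}"
proof (intro equalityI subsetI)
  let ?c = "cycle_of_list vs"
  have c: "?c permutes set vs"
    by (rule cycle_permutes)
  fix q assume "q \<in> {q. q permutes set vs \<and> perm_graph q = perm_graph ?c}"
  then have q: "q permutes set vs" and g: "perm_graph q = perm_graph ?c"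
    by auto
  have hd: "hd vs \<in> set vs"
    using l by (cases vs) auto
  have "{hd vs, ?c (hd vs)} \<in> perm_graph q"
    unfolding g doubleton_in_perm_graph_iff using cycle_of_list_moves[OF d _ hd] l by simp
  then consider "q (hd vs) = ?c (hd vs)" | "q (?c (hd vs)) = hd vs"
    unfolding doubleton_in_perm_graph_iff by blast
  then show "q \<in> {?c, Hilbert_Choice.inv ?c}"
  proof cases
    case 1
    then show ?thesis
      using perm_eq_cycle_of_list_if_same_graph[OF d l q g] by simp
  next
    case 2
    then have "Hilbert_Choice.inv q (hd vs) = ?c (hd vs)"
      using permutes_inverses(2)[OF q] by metis
    moreover have "perm_graph (Hilbert_Choice.inv q) = perm_graph ?c"
      using g perm_graph_inv[OF permutes_bij[OF q]] by simp
    ultimately have "Hilbert_Choice.inv q = ?c"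
      using perm_eq_cycle_of_list_if_same_graph[OF d l permutes_inv[OF q]] by simp
    then show ?thesis
      using inv_inv_eq[OF permutes_bij[OF q]] by auto
  qed
next
  let ?c = "cycle_of_list vs"
  have c: "?c permutes set vs"
    by (rule cycle_permutes)
  fix q assume "q \<in> {?c, Hilbert_Choice.inv ?c}"
  then consider "q = ?c" | "q = Hilbert_Choice.inv ?c"
    by blast
  then show "q \<in> {q. q permutes set vs \<and> perm_graph q = perm_graph ?c}"
    by cases (simp_all add: c permutes_inv perm_graph_inv[OF permutes_bij[OF c]])
qed

lemma cycle_of_list_neq_inv:
  assumes "distinct vs" "3 \<le> length vs"
  shows "cycle_of_list vs \<noteq> Hilbert_Choice.inv (cycle_of_list vs)"
proof
  assume eq: "cycle_of_list vs = Hilbert_Choice.inv (cycle_of_list vs)"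
  have "hd vs \<in> set vs"
    using assms(2) by (cases vs) auto
  moreover have "cycle_of_list vs (cycle_of_list vs (hd vs)) = hd vs"
    using permutes_inverses(2)[OF cycle_permutes] by (metis eq)
  ultimately show False
    using cycle_of_list_twice_moves[OF assms] by blast
qed

section \<open>Permutations acting blockwise\<close>

definition leibniz_term :: "('a \<Rightarrow> 'a \<Rightarrow> 'b::comm_ring_1) \<Rightarrow> 'a set \<Rightarrow> ('a \<Rightarrow> 'a) \<Rightarrow> 'b" where
  "leibniz_term a A p = of_int (sign p) * (\<Prod>i\<in>A. a i (p i))"

lemma restrict_id_permutes_eq: "p permutes A \<Longrightarrow> restrict_id p A = p"
  unfolding restrict_id_def using permutes_not_in by fastforce

lemma image_eq_if_restrict_id_permutes: "restrict_id p D permutes D \<Longrightarrow> p ` D = D"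
  using permutes_image[of "restrict_id p D" D] by (metis image_cong restrict_id_simps(1))

lemma restrict_id_permutes_if_closed:
  assumes "p permutes A" "finite C" "\<forall>i\<in>C. p i \<in> C"
  shows "restrict_id p C permutes C"
proof -
  have "inj_on p C"
    using permutes_inj_on[OF assms(1)] .
  with assms(2,3) have "p ` C = C"
    by (intro endo_inj_surj) auto
  with \<open>inj_on p C\<close> show ?thesis
    by (intro permutes_restrict_id) (simp add: bij_betw_def)
qed

lemma restrict_id_compose_disjoint:
  assumes q: "q permutes C" and p: "p permutes U" and disj: "C \<inter> U = {}"
  shows "restrict_id (q \<circ> p) C = q" "D \<subseteq> U \<Longrightarrow> restrict_id (q \<circ> p) D = restrict_id p D"
proof -
  show "restrict_id (q \<circ> p) C = q"
  proof
    fix x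
    show "restrict_id (q \<circ> p) C x = q x"
    proof (cases "x \<in> C")
      case True
      with disj have "x \<notin> U"
        by blast
      with True show ?thesis
        by (simp add: permutes_not_in[OF p])
    qed (simp add: permutes_not_in[OF q])
  qed
  assume "D \<subseteq> U"
  show "restrict_id (q \<circ> p) D = restrict_id p D"
  proof
    fix x
    show "restrict_id (q \<circ> p) D x = restrict_id p D x"
      using \<open>D \<subseteq> U\<close> disj permutes_in_image[OF p, of x] permutes_not_in[OF q, of "p x"]
      by (cases "x \<in> D") auto
  qed
qed

lemma restrict_id_compose_split:
  assumes p: "p permutes C \<union> U" and disj: "C \<inter> U = {}" and U: "p ` U = U"
  shows "restrict_id p C \<circ> restrict_id p U = p"
proof
  fix x
  consider "x \<in> C" | "x \<in> U" | "x \<notin> C \<union> U"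
    by blast
  then show "(restrict_id p C \<circ> restrict_id p U) x = p x"
  proof cases
    case 1
    with disj have "x \<notin> U"
      by blast
    with 1 show ?thesis
      by simp
  next
    case 2
    with U disj have "p x \<notin> C"
      by blast
    with 2 show ?thesis
      by simp
  qed (simp add: permutes_not_in[OF p])
qed

lemma leibniz_term_compose_disjoint:
  assumes q: "q permutes C" and p: "p permutes U" and disj: "C \<inter> U = {}"
    and fin: "finite C" "finite U"
  shows "leibniz_term a (C \<union> U) (q \<circ> p) = leibniz_term a C q * leibniz_term a U p"
proof -
  have "sign (q \<circ> p) = sign q * sign p"
    using sign_compose permutes_imp_permutation[OF fin(1) q] permutes_imp_permutation[OF fin(2) p]
    by blast
  moreover have "(\<Prod>i\<in>C \<union> U. a i ((q \<circ> p) i)) = (\<Prod>i\<in>C. a i (q i)) * (\<Prod>i\<in>U. a i (p i))"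
  proof -
    have C_not_U: "x \<notin> U" if "x \<in> C" for x
      using disj that by blast
    have U_not_C: "x \<notin> C" if "x \<in> U" for x
      using disj that by blast
    have "(\<Prod>i\<in>C \<union> U. a i ((q \<circ> p) i))
        = (\<Prod>i\<in>C. a i ((q \<circ> p) i)) * (\<Prod>i\<in>U. a i ((q \<circ> p) i))"
      by (rule prod.union_disjoint[OF fin disj])
    also have "(\<Prod>i\<in>C. a i ((q \<circ> p) i)) = (\<Prod>i\<in>C. a i (q i))"
      using permutes_not_in[OF p] C_not_U by (intro prod.cong) auto
    also have "(\<Prod>i\<in>U. a i ((q \<circ> p) i)) = (\<Prod>i\<in>U. a i (p i))"
      using permutes_not_in[OF q] permutes_in_image[OF p] U_not_C by (intro prod.cong) auto
    finally show ?thesis .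
  qed
  ultimately show ?thesis
    unfolding leibniz_term_def by simp
qed

definition block_perms :: "'a set set \<Rightarrow> ('a set \<Rightarrow> ('a \<Rightarrow> 'a) set) \<Rightarrow> ('a \<Rightarrow> 'a) set" where
  "block_perms S Q = {p. p permutes \<Union>S \<and> (\<forall>C\<in>S. restrict_id p C \<in> Q C)}"

lemma sum_block_perms_insert:
  assumes disj: "C \<inter> \<Union>S = {}"
    and QC: "\<forall>q\<in>Q C. q permutes C" and QS: "\<forall>D\<in>S. \<forall>q\<in>Q D. q permutes D"
  shows "(\<Sum>p\<in>block_perms (insert C S) Q. f p) = (\<Sum>(q, p)\<in>Q C \<times> block_perms S Q. f (q \<circ> p))"
proof (rule sum.reindex_bij_witness[where j = "\<lambda>p. (restrict_id p C, restrict_id p (\<Union>S))"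
      and i = "\<lambda>(q, p). q \<circ> p"])
  let ?U = "\<Union>S"
  fix p assume "p \<in> block_perms (insert C S) Q"
  then have p: "p permutes C \<union> ?U" and pC: "restrict_id p C \<in> Q C"
    and pS: "\<forall>D\<in>S. restrict_id p D \<in> Q D"
    unfolding block_perms_def by auto
  have "p ` D = D" if "D \<in> S" for D
    using pS QS that image_eq_if_restrict_id_permutes by blast
  then have U: "p ` ?U = ?U"
    by blast
  show "(case (restrict_id p C, restrict_id p ?U) of (q, p) \<Rightarrow> q \<circ> p) = p"
    using restrict_id_compose_split[OF p disj U] by simp
  then show "(case (restrict_id p C, restrict_id p ?U) of (q, p) \<Rightarrow> f (q \<circ> p)) = f p"
    by simp
  have "restrict_id p ?U permutes ?U"
    using U permutes_inj_on[OF p] by (intro permutes_restrict_id) (simp add: bij_betw_def)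
  moreover have "restrict_id (restrict_id p ?U) D = restrict_id p D" if "D \<in> S" for D
    using that unfolding restrict_id_def by auto
  ultimately show "(restrict_id p C, restrict_id p ?U) \<in> Q C \<times> block_perms S Q"
    using pC pS unfolding block_perms_def by simp
next
  let ?U = "\<Union>S"
  fix qp assume "qp \<in> Q C \<times> block_perms S Q"
  then obtain q p where qp: "qp = (q, p)" and "q \<in> Q C" and "p \<in> block_perms S Q"
    by blast
  then have q: "q permutes C" and p: "p permutes ?U" and pS: "\<forall>D\<in>S. restrict_id p D \<in> Q D"
    using QC unfolding block_perms_def by auto
  note restr = restrict_id_compose_disjoint[OF q p disj]
  show "(restrict_id ((case qp of (q, p) \<Rightarrow> q \<circ> p)) C,
      restrict_id ((case qp of (q, p) \<Rightarrow> q \<circ> p)) ?U) = qp"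
    using restr restrict_id_permutes_eq[OF p] qp by simp
  have "q \<circ> p permutes C \<union> ?U"
    using permutes_subset[OF q] permutes_subset[OF p] by (intro permutes_compose) auto
  moreover have "restrict_id (q \<circ> p) D \<in> Q D" if "D \<in> S" for D
    using restr(2)[OF Union_upper[OF that]] pS that by simp
  ultimately show "(case qp of (q, p) \<Rightarrow> q \<circ> p) \<in> block_perms (insert C S) Q"
    using restr(1) \<open>q \<in> Q C\<close> unfolding block_perms_def qp by simp
qed

lemma sum_block_perms_eq_prod:
  assumes "finite S" "\<forall>C\<in>S. finite C" "disjoint S" "\<forall>C\<in>S. \<forall>q\<in>Q C. q permutes C"
  shows "(\<Sum>p\<in>block_perms S Q. leibniz_term a (\<Union>S) p) = (\<Prod>C\<in>S. \<Sum>q\<in>Q C. leibniz_term a C q)"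
  using assms
proof (induction S rule: finite_induct)
  case empty
  have "block_perms {} Q = {id}"
    unfolding block_perms_def by auto
  then show ?case
    unfolding leibniz_term_def by simp
next
  case (insert C S)
  let ?U = "\<Union>S"
  have disj: "C \<inter> ?U = {}"
    using insert.prems(2) insert.hyps(2) unfolding pairwise_insert disjnt_def by blast
  have fin: "finite C" "finite ?U"
    using insert.hyps(1) insert.prems(1) by auto
  have QC: "\<forall>q\<in>Q C. q permutes C" and QS: "\<forall>D\<in>S. \<forall>q\<in>Q D. q permutes D"
    using insert.prems(3) by auto
  have IH: "(\<Sum>p\<in>block_perms S Q. leibniz_term a ?U p) = (\<Prod>D\<in>S. \<Sum>q\<in>Q D. leibniz_term a D q)"
    using insert.IH insert.prems pairwise_subset[OF insert.prems(2) subset_insertI] by auto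
  have "(\<Sum>p\<in>block_perms (insert C S) Q. leibniz_term a (\<Union>(insert C S)) p)
      = (\<Sum>(q, p)\<in>Q C \<times> block_perms S Q. leibniz_term a (C \<union> ?U) (q \<circ> p))"
    using sum_block_perms_insert[OF disj QC QS] by simp
  also have "\<dots> = (\<Sum>(q, p)\<in>Q C \<times> block_perms S Q. leibniz_term a C q * leibniz_term a ?U p)"
    using leibniz_term_compose_disjoint[OF _ _ disj fin] QC
    by (intro sum.cong) (auto simp: block_perms_def)
  also have "\<dots> = (\<Sum>q\<in>Q C. leibniz_term a C q) * (\<Sum>p\<in>block_perms S Q. leibniz_term a ?U p)"
    by (simp add: sum_product sum.cartesian_product)
  also have "\<dots> = (\<Prod>D\<in>insert C S. \<Sum>q\<in>Q D. leibniz_term a D q)"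
    using IH insert.hyps by simp
  finally show ?case .
qed

section \<open>Permutations with a prescribed graph\<close>

lemma support_closed:
  assumes "permutation p" "x \<in> set (support p a)"
  shows "p x \<in> set (support p a)"
proof -
  obtain i where "x = (p ^^ i) a"
    using assms(2) unfolding support_set[OF assms(1)] by blast
  then have "p x = (p ^^ Suc i) a"
    by simp
  then show ?thesis
    unfolding support_set[OF assms(1)] by (rule range_eqI)
qed

lemma support_closed_preimage:
  assumes "permutation p" "p y \<in> set (support p a)"
  shows "y \<in> set (support p a)"
proof -
  let ?O = "set (support p a)"
  have inj: "inj p"
    using assms(1) by (simp add: permutation bij_is_inj)
  have "p ` ?O \<subseteq> ?O"
    using support_closed[OF assms(1)] by blast
  then have image: "p ` ?O = ?O"
    using endo_inj_surj finite_set inj_on_subset[OF inj subset_UNIV] by blast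
  have "p y \<in> p ` ?O"
    unfolding image by (rule assms(2))
  then show ?thesis
    unfolding inj_image_mem_iff[OF inj] .
qed

lemma rtrancl_perm_graph_support:
  assumes "permutation p" "(a, y) \<in> (adj_rel (perm_graph p))\<^sup>*"
  shows "y \<in> set (support p a)"
  using assms(2)
proof (induction rule: rtrancl_induct)
  case base
  have "a = (p ^^ 0) a"
    by simp
  then show ?case
    unfolding support_set[OF assms(1)] by (rule range_eqI)
next
  case (step x y)
  then have "p x = y \<or> p y = x"
    unfolding adj_rel_def doubleton_in_perm_graph_iff by simp
  then show ?case
    using support_closed[OF assms(1) step.IH] support_closed_preimage[OF assms(1)] step.IH by metis
qed

definition graph_perms :: "nat set set \<Rightarrow> nat set \<Rightarrow> (nat \<Rightarrow> nat) set" where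
  "graph_perms F C = {q. q permutes C \<and> perm_graph q = comp_edges F C}"

lemma support_graph_perm_eq_component:
  assumes C: "C \<in> components F" "finite C" and q: "q \<in> graph_perms F C" and c: "c \<in> C"
  shows "set (support q c) = C" "q = cycle_of_list (support q c)"
proof -
  have qC: "q permutes C" and g: "perm_graph q = comp_edges F C"
    using q unfolding graph_perms_def by auto
  have perm: "permutation q"
    using permutes_imp_permutation[OF C(2) qC] .
  have "set (support q c) \<subseteq> C"
    unfolding support_set[OF perm] using permutes_in_funpow_image[OF qC c] by blast
  moreover have "C \<subseteq> set (support q c)"
  proof
    fix y assume "y \<in> C"
    then have "(c, y) \<in> (adj_rel F)\<^sup>*"
      using component_of_mem[OF C(1) c] unfolding component_def by blast
    then have "(c, y) \<in> (adj_rel (perm_graph q))\<^sup>*"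
      unfolding g using rtrancl_adj_rel_comp_edges[OF C(1) c] by blast
    then show "y \<in> set (support q c)"
      by (rule rtrancl_perm_graph_support[OF perm])
  qed
  ultimately show set_eq: "set (support q c) = C"
    by blast
  show "q = cycle_of_list (support q c)"
  proof
    fix x
    show "q x = cycle_of_list (support q c) x"
    proof (cases "x \<in> C")
      case True
      then show ?thesis
        using cycle_restrict[OF perm] set_eq by blast
    next
      case False
      then show ?thesis
        using permutes_not_in[OF qC] id_outside_supp set_eq by metis
    qed
  qed
qed

lemma component_edge_or_cycle:
  assumes F: "\<forall>e\<in>F. card e = 2" and C: "C \<in> components F" "finite C"
    and q: "q \<in> graph_perms F C"
  shows "card C = 2 \<or> is_cycle C (comp_edges F C)"
proof -
  have qC: "q permutes C" and g: "perm_graph q = comp_edges F C"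
    using q unfolding graph_perms_def by auto
  obtain c where c: "c \<in> C"
    using component_nonempty[OF C(1)] by blast
  define vs where "vs = support q c"
  have set_vs: "set vs = C" and q_vs: "q = cycle_of_list vs"
    unfolding vs_def using support_graph_perm_eq_component[OF C q c] by simp_all
  have dist: "distinct vs"
    unfolding vs_def using cycle_of_permutation[OF permutes_imp_permutation[OF C(2) qC]] by simp
  have "c \<in> verts (perm_graph q)"
    unfolding g verts_comp_edges[OF F C(1)] by (rule c)
  then have "q c \<noteq> c"
    using verts_perm_graph[OF permutes_inj[OF qC]] by simp
  then have len: "2 \<le> length vs"
    unfolding vs_def using least_power_gt_one[OF permutes_imp_permutation[OF C(2) qC], of c] by simp
  show ?thesis
  proof (cases "length vs = 2")
    case True
    then show ?thesis
      using distinct_card[OF dist] set_vs by simp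
  next
    case False
    then have "cycle_enum vs C (comp_edges F C)"
      unfolding cycle_enum_def g[symmetric] q_vs perm_graph_cycle_of_list[OF dist len]
      using dist len set_vs by simp
    then show ?thesis
      unfolding is_cycle_def by blast
  qed
qed

lemma components_perm_graph_subset:
  assumes "p permutes A" "C \<in> components (perm_graph p)"
  shows "C \<subseteq> A"
  using components_subset_verts[OF assms(2)] verts_perm_graph[OF permutes_inj[OF assms(1)]]
    permutes_not_in[OF assms(1)] by blast

lemma restrict_id_mem_graph_perms:
  assumes p: "p permutes A" "finite A" and C: "C \<in> components (perm_graph p)"
  shows "restrict_id p C \<in> graph_perms (perm_graph p) C"
proof -
  have moved: "verts (perm_graph p) = {x. p x \<noteq> x}"
    using verts_perm_graph[OF permutes_inj[OF p(1)]] .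
  have closed: "\<forall>i\<in>C. p i \<in> C"
  proof
    fix i assume i: "i \<in> C"
    then have "{i, p i} \<in> perm_graph p"
      using components_subset_verts[OF C] moved unfolding perm_graph_def by blast
    then show "p i \<in> C"
      using doubleton_subset_component component_of_mem[OF C i] by blast
  qed
  have "finite C"
    using components_perm_graph_subset[OF p(1) C] p(2) finite_subset by blast
  with closed show ?thesis
    unfolding graph_perms_def
    using restrict_id_permutes_if_closed[OF p(1)] perm_graph_restrict_id by simp
qed

lemma perms_with_graph_eq_block_perms:
  assumes F: "\<forall>e\<in>F. card e = 2" "verts F \<subseteq> A" and A: "finite A"
  shows "{p. p permutes A \<and> perm_graph p = F} = block_perms (components F) (graph_perms F)"
proof (intro equalityI subsetI)
  fix p assume "p \<in> {p. p permutes A \<and> perm_graph p = F}"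
  then have p: "p permutes A" and g: "perm_graph p = F"
    by auto
  have "verts F = {x. p x \<noteq> x}"
    using verts_perm_graph[OF permutes_inj[OF p]] g by simp
  then have "p permutes \<Union>(components F)"
    unfolding Union_components by (intro permutes_superset[OF p]) auto
  moreover have "\<forall>C\<in>components F. restrict_id p C \<in> graph_perms F C"
    using restrict_id_mem_graph_perms[OF p A] g by simp
  ultimately show "p \<in> block_perms (components F) (graph_perms F)"
    unfolding block_perms_def by simp
next
  fix p assume "p \<in> block_perms (components F) (graph_perms F)"
  then have p: "p permutes \<Union>(components F)"
    and r: "\<forall>C\<in>components F. restrict_id p C \<in> graph_perms F C"
    unfolding block_perms_def by auto
  have "perm_graph p = (\<Union>C\<in>components F. perm_graph (restrict_id p C))"
    using perm_graph_eq_Union_restrict_id[OF p] .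
  also have "\<dots> = (\<Union>C\<in>components F. comp_edges F C)"
    using r unfolding graph_perms_def by simp
  also have "\<dots> = F"
    using Union_comp_edges[OF F(1)] .
  finally have "perm_graph p = F" .
  moreover have "p permutes A"
    using permutes_subset[OF p] F(2) Union_components by simp
  ultimately show "p \<in> {p. p permutes A \<and> perm_graph p = F}"
    by simp
qed

lemma elementary_perm_graph:
  assumes "p permutes A" "finite A" "perm_graph p \<subseteq> E"
  shows "elementary E (perm_graph p)"
  unfolding elementary_def
proof (intro conjI ballI)
  fix C assume C: "C \<in> components (perm_graph p)"
  have "finite C"
    using components_perm_graph_subset[OF assms(1) C] assms(2) finite_subset by blast
  then show "card C = 2 \<or> is_cycle C (comp_edges (perm_graph p) C)"
    using component_edge_or_cycle[OF _ C] card_perm_graph_edge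
      restrict_id_mem_graph_perms[OF assms(1,2) C] by blast
qed (rule assms(3))

section \<open>Coefficients of characteristic polynomials\<close>

lemma prod_uminus: "(\<Prod>x\<in>A. - f x) = (-1) ^ card A * (\<Prod>x\<in>A. f x :: 'a::comm_ring_1)"
  by (induction A rule: infinite_finite_induct) auto

lemma char_poly_matrix_entry_zero_diagonal:
  assumes "A \<in> carrier_mat n n" "\<forall>i<n. A $$ (i, i) = 0" "i < n" "j < n"
  shows "char_poly_matrix A $$ (i, j) = (if i = j then monom 1 1 else [:- A $$ (i, j):])"
  using assms unfolding char_poly_matrix_def by (auto simp: monom_Suc)

lemma prod_char_poly_matrix_perm:
  fixes A :: "'a::comm_ring_1 mat"
  assumes A: "A \<in> carrier_mat n n" and diag: "\<forall>i<n. A $$ (i, i) = 0" and p: "p permutes {0..<n}"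
  defines "M \<equiv> {i. p i \<noteq> i}"
  shows "(\<Prod>i = 0..<n. char_poly_matrix A $$ (i, p i))
    = monom 1 (n - card M) * [:(-1) ^ card M * (\<Prod>i\<in>M. A $$ (i, p i)):]"
proof -
  have M: "M \<subseteq> {0..<n}"
    unfolding M_def by (rule moved_subset_if_permutes[OF p])
  have "(\<Prod>i = 0..<n. char_poly_matrix A $$ (i, p i))
      = (\<Prod>i = 0..<n. if p i = i then monom 1 1 else [:- A $$ (i, p i):])"
    using char_poly_matrix_entry_zero_diagonal[OF A diag] permutes_in_image[OF p]
    by (intro prod.cong) auto
  also have "\<dots> = (\<Prod>i\<in>{0..<n} - M. monom 1 1) * (\<Prod>i\<in>M. [:- A $$ (i, p i):])"
  proof -
    have "{0..<n} \<inter> {i. p i = i} = {0..<n} - M" "{0..<n} \<inter> - {i. p i = i} = M"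
      using M unfolding M_def by auto
    then show ?thesis
      by (simp add: prod.If_cases)
  qed
  also have "(\<Prod>i\<in>{0..<n} - M. monom (1::'a) 1) = monom 1 (n - card M)"
    using card_Diff_subset[OF finite_subset[OF M] M] by (simp add: monom_power)
  also have "(\<Prod>i\<in>M. [:- A $$ (i, p i):]) = [:(-1) ^ card M * (\<Prod>i\<in>M. A $$ (i, p i)):]"
    by (simp add: prod_to_poly prod_uminus)
  finally show ?thesis .
qed

lemma coeff_char_poly_zero_diagonal:
  fixes A :: "'a::comm_ring_1 mat"
  assumes A: "A \<in> carrier_mat n n" and diag: "\<forall>i<n. A $$ (i, i) = 0" and k: "k \<le> n"
  shows "coeff (char_poly A) (n - k) = (-1) ^ k *
    (\<Sum>p | p permutes {0..<n} \<and> card {i. p i \<noteq> i} = k. leibniz_term (\<lambda>i j. A $$ (i, j)) {i. p i \<noteq> i} p)"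
proof -
  let ?a = "\<lambda>i j. A $$ (i, j)"
  let ?P = "{p. p permutes {0..<n}}"
  have summand: "coeff (of_int (sign p) * (\<Prod>i = 0..<n. char_poly_matrix A $$ (i, p i))) (n - k)
      = (if card {i. p i \<noteq> i} = k then (-1) ^ k * leibniz_term ?a {i. p i \<noteq> i} p else 0)"
    if p: "p permutes {0..<n}" for p
  proof -
    have "card {i. p i \<noteq> i} \<le> n"
      using card_mono[OF _ moved_subset_if_permutes[OF p]] by simp
    with k have "n - card {i. p i \<noteq> i} = n - k \<longleftrightarrow> card {i. p i \<noteq> i} = k"
      by linarith
    then show ?thesis
      unfolding prod_char_poly_matrix_perm[OF A diag p] leibniz_term_def
      by (simp add: of_int_poly coeff_monom_mult)
  qed
  have "coeff (char_poly A) (n - k)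
      = (\<Sum>p\<in>?P. coeff (of_int (sign p) * (\<Prod>i = 0..<n. char_poly_matrix A $$ (i, p i))) (n - k))"
    unfolding char_poly_def det_def'[OF char_poly_matrix_closed[OF A]] coeff_sum by simp
  also have "\<dots> = (\<Sum>p\<in>?P. if card {i. p i \<noteq> i} = k then (-1) ^ k * leibniz_term ?a {i. p i \<noteq> i} p else 0)"
    using summand by (intro sum.cong) auto
  also have "\<dots> = (\<Sum>p\<in>{p \<in> ?P. card {i. p i \<noteq> i} = k}. (-1) ^ k * leibniz_term ?a {i. p i \<noteq> i} p)"
    by (rule sum.inter_filter[OF finite_permutations, symmetric]) simp
  finally show ?thesis
    by (simp add: sum_distrib_left)
qed

section \<open>Weights of mixed cycles\<close>

lemma Re_omega: "Re omega = 1 / 2" and Im_omega: "Im omega = sqrt 3 / 2"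
  by (simp_all add: omega_def)

lemma cnj_omega: "cnj omega = 1 - omega"
  by (simp add: complex_eq_iff Re_omega Im_omega)

lemma omega_mult_cnj: "omega * cnj omega = 1"
  by (simp add: complex_eq_iff Re_omega Im_omega)

(* The powers omega^0, ..., omega^5 of the primitive sixth root of unity omega. *)
definition sixth_roots :: "complex set" where
  "sixth_roots = {1, omega, omega - 1, -1, -omega, 1 - omega}"

lemma omega_mult_table:
  "omega * omega = omega - 1" "omega * (omega - 1) = -1" "omega * (- omega) = 1 - omega"
  "omega * (1 - omega) = 1" "(1 - omega) * omega = 1" "(1 - omega) * (omega - 1) = omega"
  "(1 - omega) * (- omega) = -1" "(1 - omega) * (1 - omega) = - omega"
  by (simp_all add: complex_eq_iff Re_omega Im_omega algebra_simps)

lemma mult_sixth_roots: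
  assumes "u \<in> sixth_roots" "t \<in> {1, omega, cnj omega}"
  shows "t * u \<in> sixth_roots"
  using assms unfolding sixth_roots_def cnj_omega
  by (elim insertE emptyE) (simp_all add: omega_mult_table)

lemma prod_sixth_roots: "\<forall>x\<in>A. f x \<in> {1, omega, cnj omega} \<Longrightarrow> prod f A \<in> sixth_roots"
proof (induction A rule: infinite_finite_induct)
  case (insert x A)
  then show ?case
    using mult_sixth_roots by simp
qed (simp_all add: sixth_roots_def)

lemma sixth_root_plus_cnj:
  assumes "u \<in> sixth_roots"
  shows "u + cnj u = (-1) ^ (of_bool (u \<in> {-omega, -cnj omega}) + of_bool (u \<in> {-1}))
    * 2 ^ (of_bool (u \<in> {1}) + of_bool (u \<in> {-1}))"
  using assms unfolding sixth_roots_def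
  by (elim insertE emptyE) (simp_all add: complex_eq_iff Re_omega Im_omega)

lemma mixed_graph_card_edge: "mixed_graph n E D \<Longrightarrow> e \<in> E \<Longrightarrow> card e = 2"
  unfolding mixed_graph_def by auto

lemma mixed_graph_finite:
  assumes "mixed_graph n E D"
  shows "finite E"
proof -
  have "E \<subseteq> Pow {0..<n}"
    using assms unfolding mixed_graph_def by fastforce
  then show ?thesis
    by (rule finite_subset) simp
qed

lemma mixed_graph_verts: "mixed_graph n E D \<Longrightarrow> verts E \<subseteq> {0..<n}"
  unfolding mixed_graph_def verts_def by fastforce

lemma n_entry_zero: "mixed_graph n E D \<Longrightarrow> {s, t} \<notin> E \<Longrightarrow> n_entry E D s t = 0"
  unfolding mixed_graph_def n_entry_def by (auto simp: insert_commute)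

lemma n_entry_edge: "{s, t} \<in> E \<Longrightarrow> n_entry E D s t \<in> {1, omega, cnj omega}"
  unfolding n_entry_def by auto

lemma n_entry_hermitian: "mixed_graph n E D \<Longrightarrow> n_entry E D t s = cnj (n_entry E D s t)"
  unfolding mixed_graph_def n_entry_def by (auto simp: insert_commute)

lemma prod_inv_perm_hermitian:
  fixes a :: "'a \<Rightarrow> 'a \<Rightarrow> complex"
  assumes p: "p permutes C" and a: "\<And>x y. a y x = cnj (a x y)"
  shows "(\<Prod>i\<in>C. a i (Hilbert_Choice.inv p i)) = cnj (\<Prod>i\<in>C. a i (p i))"
proof -
  have "(\<Prod>i\<in>C. a i (Hilbert_Choice.inv p i)) = (\<Prod>j\<in>C. a (p j) (Hilbert_Choice.inv p (p j)))"
    by (rule prod.reindex_bij_betw[symmetric, OF permutes_imp_bij[OF p]])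
  also have "\<dots> = (\<Prod>j\<in>C. cnj (a j (p j)))"
  proof (rule prod.cong[OF refl])
    fix j
    show "a (p j) (Hilbert_Choice.inv p (p j)) = cnj (a j (p j))"
      using permutes_inverses(2)[OF p, of j] a[of j "p j"] by simp
  qed
  finally show ?thesis
    by (simp add: cnj_prod)
qed

lemma cycle_weight_eq_prod:
  assumes "distinct vs"
  shows "cycle_weight E D vs = (\<Prod>x\<in>set vs. n_entry E D x (cycle_of_list vs x))"
proof -
  have "cycle_weight E D vs = (\<Prod>i<length vs. n_entry E D (vs ! i) (cycle_of_list vs (vs ! i)))"
    unfolding cycle_weight_def using cycle_of_list_nth[OF assms] by (intro prod.cong) auto
  also have "\<dots> = (\<Prod>x\<in>set vs. n_entry E D x (cycle_of_list vs x))"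
    by (rule prod.reindex_bij_betw[OF bij_betw_nth[OF assms refl refl]])
  finally show ?thesis .
qed

lemma cycle_enumD:
  assumes "cycle_enum vs C (comp_edges F C)"
  shows "distinct vs" "3 \<le> length vs" "set vs = C" "card C = length vs"
    "comp_edges F C = perm_graph (cycle_of_list vs)"
  using assms perm_graph_cycle_of_list[of vs] distinct_card[of vs]
  unfolding cycle_enum_def by auto

lemma graph_perms_cycle_enum:
  assumes "cycle_enum vs C (comp_edges F C)"
  shows "graph_perms F C = {cycle_of_list vs, Hilbert_Choice.inv (cycle_of_list vs)}"
  using perms_with_cycle_graph[OF cycle_enumD(1,2)[OF assms]] cycle_enumD(3,5)[OF assms]
  unfolding graph_perms_def by simp

lemma cycle_has_weight_in_iff:
  assumes mg: "mixed_graph n E D" and vs: "cycle_enum vs C (comp_edges F C)"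
    and Ws: "\<forall>w\<in>Ws. cnj w \<in> Ws"
  shows "cycle_has_weight_in E D F Ws C \<longleftrightarrow> cycle_weight E D vs \<in> Ws"
proof
  assume "cycle_weight E D vs \<in> Ws"
  with vs show "cycle_has_weight_in E D F Ws C"
    unfolding cycle_has_weight_in_def by blast
next
  assume "cycle_has_weight_in E D F Ws C"
  then obtain ws where ws: "cycle_enum ws C (comp_edges F C)" "cycle_weight E D ws \<in> Ws"
    unfolding cycle_has_weight_in_def by blast
  let ?c = "cycle_of_list vs"
  have c: "?c permutes C"
    using cycle_permutes[of vs] cycle_enumD(3)[OF vs] by simp
  have "cycle_of_list ws \<in> {?c, Hilbert_Choice.inv ?c}"
    using graph_perms_cycle_enum[OF ws(1)] graph_perms_cycle_enum[OF vs] by blast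
  moreover have "cycle_weight E D ws = (\<Prod>x\<in>C. n_entry E D x (cycle_of_list ws x))"
    using cycle_weight_eq_prod[OF cycle_enumD(1)[OF ws(1)]] cycle_enumD(3)[OF ws(1)] by simp
  moreover have "cycle_weight E D vs = (\<Prod>x\<in>C. n_entry E D x (?c x))"
    using cycle_weight_eq_prod[OF cycle_enumD(1)[OF vs]] cycle_enumD(3)[OF vs] by simp
  moreover have "(\<Prod>x\<in>C. n_entry E D x (Hilbert_Choice.inv ?c x)) = cnj (\<Prod>x\<in>C. n_entry E D x (?c x))"
    by (rule prod_inv_perm_hermitian[where a = "n_entry E D", OF c n_entry_hermitian[OF mg]])
  ultimately have "cycle_weight E D ws = cycle_weight E D vs \<or> cycle_weight E D ws = cnj (cycle_weight E D vs)"
    by auto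
  with ws(2) Ws show "cycle_weight E D vs \<in> Ws"
    by (metis complex_cnj_cnj)
qed

lemma cycle_weight_sixth_root:
  assumes FE: "F \<subseteq> E" and vs: "cycle_enum vs C (comp_edges F C)"
  shows "cycle_weight E D vs \<in> sixth_roots"
  unfolding cycle_weight_eq_prod[OF cycle_enumD(1)[OF vs]]
proof (rule prod_sixth_roots, rule ballI)
  fix x assume x: "x \<in> set vs"
  have "{x, cycle_of_list vs x} \<in> perm_graph (cycle_of_list vs)"
    unfolding doubleton_in_perm_graph_iff using cycle_of_list_moves[OF cycle_enumD(1)[OF vs] _ x]
      cycle_enumD(2)[OF vs] by simp
  then have "{x, cycle_of_list vs x} \<in> E"
    using FE cycle_enumD(5)[OF vs] unfolding comp_edges_def by auto
  then show "n_entry E D x (cycle_of_list vs x) \<in> {1, omega, cnj omega}"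
    by (rule n_entry_edge)
qed

section \<open>Contributions of the components of an elementary subgraph\<close>

lemma sum_graph_perms_edge:
  assumes mg: "mixed_graph n E D" and FE: "F \<subseteq> E" and C: "C \<in> components F" "card C = 2"
  shows "(\<Sum>q\<in>graph_perms F C. leibniz_term (n_entry E D) C q) = -1"
proof -
  obtain u v where uv: "C = {u, v}" "u \<noteq> v"
    using C(2) by (auto simp: card_2_iff)
  have F: "\<forall>e\<in>F. card e = 2"
    using FE mixed_graph_card_edge[OF mg] by blast
  have edges: "comp_edges F C = {{u, v}}"
    using comp_edges_card_2[OF F C] uv by simp
  have "graph_perms F C = {transpose u v}"
    using perms_with_doubleton_graph[OF uv(2)] unfolding graph_perms_def edges unfolding uv(1) .
  moreover have "n_entry E D u v * n_entry E D v u = 1"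
  proof -
    have "{u, v} \<in> E"
      using edges FE unfolding comp_edges_def by auto
    then have "n_entry E D u v \<in> {1, omega, cnj omega}"
      by (rule n_entry_edge)
    moreover have "z * cnj z = 1" if "z \<in> {1, omega, cnj omega}" for z
      using that omega_mult_cnj by (auto simp: mult.commute)
    ultimately show ?thesis
      using n_entry_hermitian[OF mg, where s = u and t = v] by simp
  qed
  ultimately show ?thesis
    unfolding leibniz_term_def using uv by (simp add: sign_swap_id)
qed

lemma sum_graph_perms_cycle:
  assumes mg: "mixed_graph n E D" and vs: "cycle_enum vs C (comp_edges F C)"
  defines "W \<equiv> cycle_weight E D vs"
  shows "(\<Sum>q\<in>graph_perms F C. leibniz_term (n_entry E D) C q) = (-1) ^ (card C - 1) * (W + cnj W)"
proof -
  let ?c = "cycle_of_list vs"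
  note vs' = cycle_enumD[OF vs]
  have c: "?c permutes C"
    using cycle_permutes vs'(3) by metis
  have "vs \<noteq> []"
    using vs'(2) by auto
  then have "sign ?c = (-1) ^ (card C - 1)"
    using sign_cycle_of_list[OF vs'(1)] vs'(4) by simp
  then have sign: "sign ?c = (-1) ^ (card C - 1)" "sign (Hilbert_Choice.inv ?c) = (-1) ^ (card C - 1)"
    using sign_inverse[OF permutation_of_cycle[of vs]] by simp_all
  have W: "(\<Prod>x\<in>C. n_entry E D x (?c x)) = W"
    unfolding W_def using cycle_weight_eq_prod[OF vs'(1)] vs'(3) by simp
  have cnj_W: "(\<Prod>x\<in>C. n_entry E D x (Hilbert_Choice.inv ?c x)) = cnj W"
    using prod_inv_perm_hermitian[where a = "n_entry E D", OF c n_entry_hermitian[OF mg]] W by simp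
  have "(\<Sum>q\<in>graph_perms F C. leibniz_term (n_entry E D) C q)
      = leibniz_term (n_entry E D) C ?c + leibniz_term (n_entry E D) C (Hilbert_Choice.inv ?c)"
    unfolding graph_perms_cycle_enum[OF vs] using cycle_of_list_neq_inv[OF vs'(1,2)] by simp
  also have "\<dots> = (-1) ^ (card C - 1) * W + (-1) ^ (card C - 1) * cnj W"
    unfolding leibniz_term_def W cnj_W sign by simp
  finally show ?thesis
    by (simp add: distrib_left)
qed

lemma sum_graph_perms_component:
  assumes mg: "mixed_graph n E D" and FE: "F \<subseteq> E" and C: "C \<in> components F"
    and el: "card C = 2 \<or> is_cycle C (comp_edges F C)"
  defines "cyc \<equiv> \<lambda>Ws. of_bool (cycle_has_weight_in E D F Ws C) :: nat"
  shows "(\<Sum>q\<in>graph_perms F C. leibniz_term (n_entry E D) C q)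
    = (-1) ^ (card C - 1 + cyc {-omega, -cnj omega} + cyc {-1}) * 2 ^ (cyc {1} + cyc {-1})"
proof (cases "card C = 2")
  case True
  then have "cyc Ws = 0" for Ws
    unfolding cyc_def cycle_has_weight_in_def using cycle_enumD(2,4) by fastforce
  then show ?thesis
    using sum_graph_perms_edge[OF mg FE C True] True by simp
next
  case False
  with el obtain vs where vs: "cycle_enum vs C (comp_edges F C)"
    unfolding is_cycle_def by blast
  let ?W = "cycle_weight E D vs"
  have "cyc Ws = of_bool (?W \<in> Ws)" if "\<forall>w\<in>Ws. cnj w \<in> Ws" for Ws
    unfolding cyc_def using cycle_has_weight_in_iff[OF mg vs that] by simp
  then have "cyc {1} = of_bool (?W \<in> {1})" "cyc {-1} = of_bool (?W \<in> {-1})"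
    "cyc {-omega, -cnj omega} = of_bool (?W \<in> {-omega, -cnj omega})"
    by simp_all
  then show ?thesis
    using sum_graph_perms_cycle[OF mg vs] sixth_root_plus_cnj[OF cycle_weight_sixth_root[OF FE vs]]
    by (simp add: power_add)
qed

lemma sum_of_bool_cycle_has_weight_in:
  assumes "finite (components F)"
  shows "(\<Sum>C\<in>components F. of_bool (cycle_has_weight_in E D F Ws C)) = num_cycles E D F Ws"
proof -
  have "components F \<inter> {C. cycle_has_weight_in E D F Ws C}
      = {C \<in> components F. cycle_has_weight_in E D F Ws C}"
    by blast
  with assms show ?thesis
    unfolding num_cycles_def by simp
qed

lemma sum_perms_with_graph:
  assumes mg: "mixed_graph n E D" and F: "elementary E F"
  shows "(\<Sum>p | p permutes {0..<n} \<and> perm_graph p = F. leibniz_term (n_entry E D) {i. p i \<noteq> i} p)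
    = (-1) ^ (rank_r F + l_sn E D F + l_n E D F) * 2 ^ (l_p E D F + l_n E D F)"
proof -
  let ?a = "n_entry E D" and ?S = "components F"
  let ?cyc = "\<lambda>Ws C. of_bool (cycle_has_weight_in E D F Ws C) :: nat"
  have FE: "F \<subseteq> E" and el: "\<forall>C\<in>?S. card C = 2 \<or> is_cycle C (comp_edges F C)"
    using F unfolding elementary_def by auto
  have F2: "\<forall>e\<in>F. card e = 2"
    using FE mixed_graph_card_edge[OF mg] by blast
  have finF: "finite F"
    using finite_subset[OF FE mixed_graph_finite[OF mg]] .
  have vF: "verts F \<subseteq> {0..<n}"
    using FE mixed_graph_verts[OF mg] unfolding verts_def by blast
  note fibre = perms_with_graph_eq_block_perms[OF F2 vF finite_atLeastLessThan]
  have "(\<Sum>p | p permutes {0..<n} \<and> perm_graph p = F. leibniz_term ?a {i. p i \<noteq> i} p)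
      = (\<Sum>p\<in>block_perms ?S (graph_perms F). leibniz_term ?a (\<Union>?S) p)"
  proof (rule sum.cong[OF fibre])
    fix p assume "p \<in> block_perms ?S (graph_perms F)"
    then have "p permutes {0..<n}" "perm_graph p = F"
      using fibre by auto
    then have "{i. p i \<noteq> i} = \<Union>?S"
      using verts_perm_graph[OF permutes_inj[of p "{0..<n}"]] Union_components[of F] by simp
    then show "leibniz_term ?a {i. p i \<noteq> i} p = leibniz_term ?a (\<Union>?S) p"
      by simp
  qed
  also have "\<dots> = (\<Prod>C\<in>?S. \<Sum>q\<in>graph_perms F C. leibniz_term ?a C q)"
    using finite_components[OF finF F2] ballI[OF finite_component[OF finF F2]] disjoint_components
    by (rule sum_block_perms_eq_prod) (auto simp: graph_perms_def)
  also have "\<dots> = (\<Prod>C\<in>?S. (-1) ^ (card C - 1 + ?cyc {-omega, -cnj omega} C + ?cyc {-1} C)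
      * 2 ^ (?cyc {1} C + ?cyc {-1} C))"
  proof (rule prod.cong[OF refl])
    fix C assume "C \<in> ?S"
    then show "(\<Sum>q\<in>graph_perms F C. leibniz_term ?a C q)
      = (-1) ^ (card C - 1 + ?cyc {-omega, -cnj omega} C + ?cyc {-1} C) * 2 ^ (?cyc {1} C + ?cyc {-1} C)"
      using sum_graph_perms_component[OF mg FE] el by simp
  qed
  also have "\<dots> = (-1) ^ (\<Sum>C\<in>?S. card C - 1 + ?cyc {-omega, -cnj omega} C + ?cyc {-1} C)
      * 2 ^ (\<Sum>C\<in>?S. ?cyc {1} C + ?cyc {-1} C)"
    by (simp add: power_sum prod.distrib)
  also have "\<dots> = (-1) ^ (rank_r F + l_sn E D F + l_n E D F) * 2 ^ (l_p E D F + l_n E D F)"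
    using sum_card_components[OF finF F2] sum_of_bool_cycle_has_weight_in[OF finite_components[OF finF F2]]
    unfolding l_p_def l_n_def l_sn_def by (simp add: sum.distrib)
  finally show ?thesis .
qed

section \<open>The coefficient formula\<close>

lemma leibniz_term_eq_0_if_perm_graph:
  assumes p: "p permutes A" "finite A" and E: "\<not> perm_graph p \<subseteq> E"
    and a: "\<And>i j. {i, j} \<notin> E \<Longrightarrow> a i j = 0"
  shows "leibniz_term a {i. p i \<noteq> i} p = 0"
proof -
  from E obtain e where "e \<in> perm_graph p" "e \<notin> E"
    by blast
  then obtain i where "{i, p i} \<notin> E" "p i \<noteq> i"
    unfolding perm_graph_def by blast
  moreover have "finite {i. p i \<noteq> i}"
    using moved_subset_if_permutes[OF p(1)] p(2) finite_subset by blast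
  ultimately have "(\<Prod>i | p i \<noteq> i. a i (p i)) = 0"
    using a by (intro prod_zero) auto
  then show ?thesis
    unfolding leibniz_term_def by simp
qed

lemma sum_perms_group_by_graph:
  fixes a :: "nat \<Rightarrow> nat \<Rightarrow> 'b::comm_ring_1"
  assumes E: "finite E" and a: "\<And>i j. {i, j} \<notin> E \<Longrightarrow> a i j = 0"
  shows "(\<Sum>p | p permutes {0..<n} \<and> card {i. p i \<noteq> i} = k. leibniz_term a {i. p i \<noteq> i} p)
    = (\<Sum>F | elementary E F \<and> card (verts F) = k.
         \<Sum>p | p permutes {0..<n} \<and> perm_graph p = F. leibniz_term a {i. p i \<noteq> i} p)"
proof -
  let ?f = "\<lambda>p. leibniz_term a {i. p i \<noteq> i} p"
  let ?P = "{p. p permutes {0..<n} \<and> card {i. p i \<noteq> i} = k}"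
  let ?S = "{p \<in> ?P. perm_graph p \<subseteq> E}"
  let ?T = "{F. elementary E F \<and> card (verts F) = k}"
  have card_verts: "card (verts (perm_graph p)) = card {i. p i \<noteq> i}" if "p permutes {0..<n}" for p
    using verts_perm_graph[OF permutes_inj[OF that]] by simp
  have finP: "finite ?P"
    using finite_permutations[of "{0..<n}"] by (rule rev_finite_subset) auto
  have "sum ?f ?P = sum ?f ?S"
  proof (rule sum.mono_neutral_right[OF finP])
    show "\<forall>p\<in>?P - ?S. ?f p = 0"
    proof
      fix p assume "p \<in> ?P - ?S"
      then have "p permutes {0..<n}" "\<not> perm_graph p \<subseteq> E"
        by simp_all
      then show "?f p = 0"
        by (rule leibniz_term_eq_0_if_perm_graph[OF _ finite_atLeastLessThan _ a])
    qed
  qed blast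
  also have "\<dots> = (\<Sum>F\<in>?T. sum ?f {p \<in> ?S. perm_graph p = F})"
  proof (rule sum.group[symmetric])
    show "finite ?S"
      using finP by (rule rev_finite_subset) blast
    show "finite ?T"
      using E by (rule rev_finite_subset[OF finite_Pow_iff[THEN iffD2]]) (auto simp: elementary_def)
    show "perm_graph ` ?S \<subseteq> ?T"
      using elementary_perm_graph[OF _ finite_atLeastLessThan] card_verts by auto
  qed
  also have "\<dots> = (\<Sum>F\<in>?T. sum ?f {p. p permutes {0..<n} \<and> perm_graph p = F})"
  proof (rule sum.cong[OF refl])
    fix F assume "F \<in> ?T"
    then have "{p \<in> ?S. perm_graph p = F} = {p. p permutes {0..<n} \<and> perm_graph p = F}"
      using card_verts unfolding elementary_def by auto
    then show "sum ?f {p \<in> ?S. perm_graph p = F} = sum ?f {p. p permutes {0..<n} \<and> perm_graph p = F}"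
      by simp
  qed
  finally show ?thesis .
qed

lemma coeff_char_poly_N_mat:
  assumes mg: "mixed_graph n E D" and k: "k \<le> n"
  shows "coeff (char_poly (N_mat n E D)) (n - k) = (-1) ^ k *
    (\<Sum>p | p permutes {0..<n} \<and> card {i. p i \<noteq> i} = k. leibniz_term (n_entry E D) {i. p i \<noteq> i} p)"
proof -
  let ?N = "N_mat n E D"
  have N: "?N \<in> carrier_mat n n"
    unfolding N_mat_def by simp
  have "{i, i} \<notin> E" for i
    using mixed_graph_card_edge[OF mg] by fastforce
  then have diag: "\<forall>i<n. ?N $$ (i, i) = 0"
    unfolding N_mat_def using n_entry_zero[OF mg] by simp
  have "leibniz_term (\<lambda>i j. ?N $$ (i, j)) {i. p i \<noteq> i} p = leibniz_term (n_entry E D) {i. p i \<noteq> i} p"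
    if "p permutes {0..<n}" for p
    unfolding leibniz_term_def N_mat_def using moved_subset_if_permutes[OF that] permutes_in_image[OF that]
    by (intro arg_cong2[where f = "(*)"] refl prod.cong) auto
  then show ?thesis
    unfolding coeff_char_poly_zero_diagonal[OF N diag k] by (intro arg_cong2[where f = "(*)"] refl sum.cong) auto
qed

lemma power_int_minus_one_add:
  "(-1::'a::field) powi (- int k + int a + int b + int c) = (-1) ^ k * (-1) ^ (a + b + c)"
proof -
  have exponent: "- int k + int a + int b + int c = - int k + int (a + b + c)"
    by simp
  have "(-1::'a) powi (- int k + int (a + b + c)) = (-1) powi (- int k) * (-1) powi int (a + b + c)"
    by (rule power_int_add) simp
  then show ?thesis
    unfolding exponent by (simp only: power_int_minus_one_minus power_int_of_nat)
qed

theorem theorem2p6: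
  fixes n :: nat and E :: "nat set set" and D :: "(nat \<times> nat) set" and k :: nat
  assumes "mixed_graph n E D" and "k \<le> n"
  shows "coeff (char_poly (N_mat n E D)) (n - k) =
    (\<Sum>F\<in>{F. elementary E F \<and> card (verts F) = k}.
       (-1::complex) powi (- int k + int (rank_r F) + int (l_sn E D F) + int (l_n E D F))
       * 2 ^ (l_p E D F + l_n E D F))"
proof -
  let ?T = "{F. elementary E F \<and> card (verts F) = k}"
  let ?term = "\<lambda>p. leibniz_term (n_entry E D) {i. p i \<noteq> i} p"
  have "coeff (char_poly (N_mat n E D)) (n - k)
      = (-1) ^ k * (\<Sum>p | p permutes {0..<n} \<and> card {i. p i \<noteq> i} = k. ?term p)"
    by (rule coeff_char_poly_N_mat[OF assms])
  also have "\<dots> = (-1) ^ k * (\<Sum>F\<in>?T. \<Sum>p | p permutes {0..<n} \<and> perm_graph p = F. ?term p)"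
    using sum_perms_group_by_graph[OF mixed_graph_finite[OF assms(1)] n_entry_zero[OF assms(1)]]
    by simp
  also have "\<dots> = (\<Sum>F\<in>?T. (-1) ^ k *
      ((-1) ^ (rank_r F + l_sn E D F + l_n E D F) * 2 ^ (l_p E D F + l_n E D F)))"
    using sum_perms_with_graph[OF assms(1)] by (simp add: sum_distrib_left)
  also have "\<dots> = (\<Sum>F\<in>?T. (-1) powi (- int k + int (rank_r F) + int (l_sn E D F) + int (l_n E D F))
      * 2 ^ (l_p E D F + l_n E D F))"
    by (simp only: power_int_minus_one_add mult.assoc)
  finally show ?thesis .
qed

end
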